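(* Let $K=10_{164}$, with Alexander polynomial $\Delta_K(t)=3-11t+17t^2-11t^3+3t^4$. There exists an epimorphism $\alpha\colon\pi_K\to D_3$ such that \[\Delta_K^{\varrho\circ\alpha}(t)\doteq\frac{(3-11t+17t^2-11t^3+3t^4)(3-13t^2+13t^4-3t^6)}{t-1},\] and consequently there is no polynomial $f(t)$ with integer coefficients such that $\Delta_K^{\varrho\circ\alpha}(t)\doteq\frac{\Delta_K(t)}{1-t}f(t)f(-t)$. (Explicitly, $\alpha$ may be taken to send the Wirtinger generators $a,\dots,k$ of the closure of the braid $\sigma_1\sigma_2^{-1}\sigma_3^2\sigma_2^{-1}\sigma_1\sigma_2^{-1}\sigma_3^{-1}\sigma_2^{-1}\sigma_1\sigma_2^{-1}$ — with relators $b^{-1}a^{-1}ea$, $a^{-1}cfc^{-1}$, $d^{-1}f^{-1}gf$, $f^{-1}g^{-1}hg$, $c^{-1}hih^{-1}$, $h^{-1}e^{-1}je$, $e^{-1}iki^{-1}$, $k^{-1}gdg^{-1}$, $i^{-1}gbg^{-1}$, $g^{-1}j^{-1}aj$ — to $a,c,f,k\mapsto xy^2$; $b,g,i\mapsto x$; $d,e,h,j\mapsto xy$.)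
   Context: $D_3=\langle x,y\mid x^2=y^3=1,\ xyx=y^{-1}\rangle$, acting on $\mathbb Z/3$ by $y\cdot n=n-1$, $x\cdot n=-n$; $\varrho\colon D_3\to\mathrm{GL}(3,\mathbb Z)$ is the associated permutation representation. $\pi_K=\pi_1(S^3\setminus\nu K)$. Twisted Alexander polynomial (Wada's invariant): let $\phi\colon\pi_K\to\mathbb Z$ send the oriented meridian to $1$; for $\alpha\colon\pi_K\to\mathrm{Aut}(V)$, $V$ a finitely generated free module over a UFD $R$ with quotient field $Q$, let $\alpha\otimes\phi$ act on $V\otimes_R R[t^{\pm1}]$ by $g\mapsto(v\otimes f\mapsto\alpha(g)v\otimes t^{\phi(g)}f)$. For a deficiency-one presentation $\langle g_1,\dots,g_{k+1}\mid r_1,\dots,r_k\rangle$ of $\pi_K$ with Fox matrix $M=(\partial r_i/\partial g_j)$ and $M_i$ obtained by deleting column $i$ with $\phi(g_i)\ne0$, set $\Delta_K^\alpha(t)=\det((\alpha\otimes\phi)(M_i))\det((\alpha\otimes\phi)(1-g_i))^{-1}\in Q(t)$; it is well defined up to multiplication by $\pm t^k$ here, and $\doteq$ denotes equality up to this indeterminacy. *)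

theory Defs
  imports "Jordan_Normal_Form.Determinant"
          "HOL-Computational_Algebra.Polynomial"
          "HOL-Computational_Algebra.Fraction_Field"
          "HOL-Library.Numeral_Type"
begin

text \<open>Elements of D_3 are represented by their (faithful) action on Z/3 = the type 3:
  y acts by n -> n - 1, x acts by n -> -n.\<close>

definition D3_x :: "3 \<Rightarrow> 3" where "D3_x = (\<lambda>n. - n)"
definition D3_y :: "3 \<Rightarrow> 3" where "D3_y = (\<lambda>n. n - 1)"

inductive_set D3 :: "(3 \<Rightarrow> 3) set" where
  D3_id: "id \<in> D3"
| D3_mx: "g \<in> D3 \<Longrightarrow> D3_x \<circ> g \<in> D3"
| D3_my: "g \<in> D3 \<Longrightarrow> D3_y \<circ> g \<in> D3"

type_synonym Qt = "int poly fract"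

definition rho :: "(3 \<Rightarrow> 3) \<Rightarrow> Qt mat" where
  "rho g = mat 3 3 (\<lambda>(i, j). if g (of_nat j) = of_nat i then 1 else 0)"

text \<open>A letter is a pair (generator index, sign); True = generator, False = its inverse.\<close>
type_synonym letter = "nat \<times> bool"

fun eval_word :: "(nat \<Rightarrow> (3 \<Rightarrow> 3)) \<Rightarrow> letter list \<Rightarrow> (3 \<Rightarrow> 3)" where
  "eval_word a [] = id"
| "eval_word a ((h, True) # w) = a h \<circ> eval_word a w"
| "eval_word a ((h, False) # w) = inv_into UNIV (a h) \<circ> eval_word a w"

definition tvar :: Qt where "tvar = Fract [:0, 1:] 1"

definition polyQt :: "int poly \<Rightarrow> Qt" where "polyQt p = Fract p 1"

text \<open>(alpha (x) phi) on letters: phi sends every Wirtinger generator (an oriented meridian)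
  to 1, so g |-> t * rho(alpha g) and g^-1 |-> t^-1 * rho(alpha g ^-1).\<close>
definition twist_letter :: "(nat \<Rightarrow> (3 \<Rightarrow> 3)) \<Rightarrow> letter \<Rightarrow> Qt mat" where
  "twist_letter a l = (if snd l then tvar \<cdot>\<^sub>m rho (a (fst l))
                       else inverse tvar \<cdot>\<^sub>m rho (inv_into UNIV (a (fst l))))"

text \<open>Image under (alpha (x) phi) of the Fox derivative d w / d g_j, using
  d(uv) = du + u dv, d g_j/d g_j = 1, d g_j^-1 / d g_j = - g_j^-1.\<close>
fun fox_twisted :: "(nat \<Rightarrow> (3 \<Rightarrow> 3)) \<Rightarrow> letter list \<Rightarrow> nat \<Rightarrow> Qt mat" where
  "fox_twisted a [] j = 0\<^sub>m 3 3"
| "fox_twisted a (l # w) j =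
     (if fst l = j then (if snd l then 1\<^sub>m 3 else - twist_letter a l) else 0\<^sub>m 3 3)
     + twist_letter a l * fox_twisted a w j"

text \<open>Generators a,b,c,d,e,f,g,h,i,j,k are numbered 0..10; the presentation comes from the
  closure of the braid s1 s2^-1 s3^2 s2^-1 s1 s2^-1 s3^-1 s2^-1 s1 s2^-1.\<close>

definition K_ngens :: nat where "K_ngens = 11"

definition K_relators :: "letter list list" where
  "K_relators =
    [ [(1,False),(0,False),(4,True),(0,True)],
      [(0,False),(2,True),(5,True),(2,False)],
      [(3,False),(5,False),(6,True),(5,True)],
      [(5,False),(6,False),(7,True),(6,True)],
      [(2,False),(7,True),(8,True),(7,False)],
      [(7,False),(4,False),(9,True),(4,True)],
      [(4,False),(8,True),(10,True),(8,False)],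
      [(10,False),(6,True),(3,True),(6,False)],
      [(8,False),(6,True),(1,True),(6,False)],
      [(6,False),(9,False),(0,True),(9,True)] ]"

text \<open>A map on generators defines a homomorphism pi_K -> D_3 iff it lands in D_3 and kills
  every relator; it is an epimorphism iff moreover every element of D_3 is the image of a word.\<close>
definition is_epi_D3 :: "(nat \<Rightarrow> (3 \<Rightarrow> 3)) \<Rightarrow> bool" where
  "is_epi_D3 a \<longleftrightarrow>
     (\<forall>g < K_ngens. a g \<in> D3)
   \<and> (\<forall>r \<in> set K_relators. eval_word a r = id)
   \<and> (\<forall>d \<in> D3. \<exists>w. (\<forall>l \<in> set w. fst l < K_ngens) \<and> eval_word a w = d)"

text \<open>The (3*10) x (3*10) matrix obtained from the Fox matrix (rows = relators, columns =
  generators) by deleting column i and applying alpha (x) phi blockwise.\<close>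
definition fox_block_matrix :: "(nat \<Rightarrow> (3 \<Rightarrow> 3)) \<Rightarrow> nat \<Rightarrow> Qt mat" where
  "fox_block_matrix a i =
     mat (3 * length K_relators) (3 * (K_ngens - 1))
       (\<lambda>(r, c). let col = (if c div 3 < i then c div 3 else c div 3 + 1) in
                 fox_twisted a (K_relators ! (r div 3)) col $$ (r mod 3, c mod 3))"

definition twisted_alexander :: "(nat \<Rightarrow> (3 \<Rightarrow> 3)) \<Rightarrow> nat \<Rightarrow> Qt" where
  "twisted_alexander a i =
     det (fox_block_matrix a i) / det (1\<^sub>m 3 - twist_letter a (i, True))"

definition doteq :: "Qt \<Rightarrow> Qt \<Rightarrow> bool" (infix \<open>\<doteq>\<close> 50) where
  "x \<doteq> y \<longleftrightarrow> (\<exists>k :: int. \<exists>s \<in> {1, -1 :: Qt}. x = s * tvar powi k * y)"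

definition Alex_10_164 :: "int poly" where
  "Alex_10_164 = [:3, -11, 17, -11, 3:]"

end

theory Submission
  imports Defs "Jordan_Normal_Form.Column_Operations"
begin

text \<open>
  The epimorphism sends the Wirtinger generators to the reflections \<open>x y\<^sup>2\<close>, \<open>x\<close>, \<open>x y\<close> of
  \<open>D\<^sub>3\<close>; every relator then evaluates to the identity, and \<open>x\<close> together with \<open>x \<cdot> x y = y\<close>
  generates \<open>D\<^sub>3\<close>.

  Every Wirtinger relator contains exactly two inverse letters, so multiplying the twisted Fox
  matrix by \<open>t\<^sup>2\<close> turns it into a \<open>30 \<times> 30\<close> matrix over \<open>\<int>[t]\<close>. Its determinant, and that of
  \<open>1 - t \<rho>(\<alpha>(a))\<close>, are computed by fraction-free elimination, each step of which is an
  instance of Chi\<grave>o's condensation identity.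

  Multiplication by \<open>\<plusminus>t\<^sup>k\<close> preserves leading coefficients up to sign. After cancelling
  \<open>\<Delta>\<^sub>K(t)/(1 - t)\<close>, the cofactor \<open>3 - 13t\<^sup>2 + 13t\<^sup>4 - 3t\<^sup>6\<close> would have to agree with
  \<open>f(t) f(-t)\<close> up to \<open>\<plusminus>t\<^sup>k\<close>; the latter has leading coefficient \<open>\<plusminus>lc(f)\<^sup>2\<close>, and \<open>3\<close> is
  not a square.
\<close>

section \<open>Chi\<grave>o condensation\<close>

lemma chio_elimination_matrix:
  fixes A :: "'a::comm_ring_1 mat"
  assumes A: "A \<in> carrier_mat (Suc m) (Suc m)"
  defines "E \<equiv> mat (Suc m) (Suc m) (\<lambda>(r, c).
    if r = c then (if r = 0 then 1 else A $$ (0, 0)) else if c = 0 then - A $$ (r, 0) else 0)"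
  shows "det E = A $$ (0, 0) ^ m"
    and "E * A = mat (Suc m) (Suc m) (\<lambda>(r, c).
      if r = 0 then A $$ (0, c) else A $$ (0, 0) * A $$ (r, c) - A $$ (r, 0) * A $$ (0, c))"
proof -
  have E: "E \<in> carrier_mat (Suc m) (Suc m)" unfolding E_def by auto
  have "diag_mat E = 1 # replicate m (A $$ (0, 0))"
    by (rule nth_equalityI)
      (auto simp: diag_mat_def E_def nth_Cons simp del: upt_Suc split: nat.split)
  then show "det E = A $$ (0, 0) ^ m"
    by (subst det_lower_triangular[OF _ E]) (auto simp: E_def)
  show "E * A = mat (Suc m) (Suc m) (\<lambda>(r, c).
      if r = 0 then A $$ (0, c) else A $$ (0, 0) * A $$ (r, c) - A $$ (r, 0) * A $$ (0, c))"
  proof (rule eq_matI)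
    fix r c assume "r < dim_row (mat (Suc m) (Suc m) (\<lambda>(r, c).
      if r = 0 then A $$ (0, c) else A $$ (0, 0) * A $$ (r, c) - A $$ (r, 0) * A $$ (0, c)))"
      and "c < dim_col (mat (Suc m) (Suc m) (\<lambda>(r, c).
      if r = 0 then A $$ (0, c) else A $$ (0, 0) * A $$ (r, c) - A $$ (r, 0) * A $$ (0, c)))"
    then have r: "r < Suc m" and c: "c < Suc m" by auto
    have "(E * A) $$ (r, c) = (\<Sum>k<Suc m. E $$ (r, k) * A $$ (k, c))"
      using r c E A by (simp add: scalar_prod_def atLeast0LessThan)
    also have "\<dots> = (\<Sum>k<Suc m. (if k = 0 \<and> r \<noteq> 0 then - A $$ (r, 0) * A $$ (0, c) else 0)
        + (if k = r then (if r = 0 then 1 else A $$ (0, 0)) * A $$ (r, c) else 0))"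
      by (rule sum.cong) (use r in \<open>auto simp: E_def\<close>)
    finally show "(E * A) $$ (r, c) = mat (Suc m) (Suc m) (\<lambda>(r, c).
      if r = 0 then A $$ (0, c) else A $$ (0, 0) * A $$ (r, c) - A $$ (r, 0) * A $$ (0, c)) $$ (r, c)"
      using r c by (simp add: sum.distrib)
  qed (use E A in auto)
qed

lemma chio_condensation_first:
  fixes A :: "'a::comm_ring_1 mat"
  assumes A: "A \<in> carrier_mat (Suc m) (Suc m)"
  shows "A $$ (0, 0) ^ m * det A = A $$ (0, 0) * det (mat m m (\<lambda>(r, c).
    A $$ (0, 0) * A $$ (Suc r, Suc c) - A $$ (Suc r, 0) * A $$ (0, Suc c)))"
proof -
  define E where "E = mat (Suc m) (Suc m) (\<lambda>(r, c).
    if r = c then (if r = 0 then 1 else A $$ (0, 0)) else if c = 0 then - A $$ (r, 0) else 0)"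
  define EA where "EA = mat (Suc m) (Suc m) (\<lambda>(r, c).
    if r = 0 then A $$ (0, c) else A $$ (0, 0) * A $$ (r, c) - A $$ (r, 0) * A $$ (0, c))"
  note E = chio_elimination_matrix[OF A, folded E_def, folded EA_def]
  have "A $$ (0, 0) ^ m * det A = det EA"
    using det_mult[of E "Suc m" A] A E by (simp add: E_def)
  also have "\<dots> = (\<Sum>i<Suc m. EA $$ (i, 0) * cofactor EA i 0)"
    by (rule laplace_expansion_column) (auto simp: EA_def)
  also have "\<dots> = EA $$ (0, 0) * cofactor EA 0 0 + (\<Sum>i<m. EA $$ (Suc i, 0) * cofactor EA (Suc i) 0)"
    by (rule sum.lessThan_Suc_shift)
  also have "EA $$ (0, 0) = A $$ (0, 0)" by (simp add: EA_def)
  also have "(\<Sum>i<m. EA $$ (Suc i, 0) * cofactor EA (Suc i) 0) = 0"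
    by (rule sum.neutral) (auto simp: EA_def)
  finally have "A $$ (0, 0) ^ m * det A = A $$ (0, 0) * cofactor EA 0 0" by simp
  moreover have "mat_delete EA 0 0 = mat m m (\<lambda>(r, c).
      A $$ (0, 0) * A $$ (Suc r, Suc c) - A $$ (Suc r, 0) * A $$ (0, Suc c))"
    by (rule eq_matI) (auto simp: mat_delete_def EA_def)
  ultimately show ?thesis unfolding cofactor_def by simp
qed

lemma chio_condensation:
  fixes A :: "'a::comm_ring_1 mat"
  assumes A: "A \<in> carrier_mat (Suc m) (Suc m)" and i: "i < Suc m" and j: "j < Suc m"
  shows "(-1) ^ (i + j) * A $$ (i, j) ^ m * det A = A $$ (i, j) * det (mat m m (\<lambda>(r, c).
    A $$ (i, j) * A $$ (insert_index i r, insert_index j c)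
      - A $$ (insert_index i r, j) * A $$ (i, insert_index j c)))"
proof -
  define A1 where "A1 = swap_row_to_front A i"
  define A2 where "A2 = swap_col_to_front A1 j"
  have A1: "A1 = mat (Suc m) (Suc m) (\<lambda>(r, c).
      if r = 0 then A $$ (i, c) else if r \<le> i then A $$ (r - 1, c) else A $$ (r, c))"
    unfolding A1_def by (rule swap_row_to_front_result[OF A i])
  then have A1c: "A1 \<in> carrier_mat (Suc m) (Suc m)" by auto
  have A2: "A2 = mat (Suc m) (Suc m) (\<lambda>(r, c).
      if c = 0 then A1 $$ (r, j) else if c \<le> j then A1 $$ (r, c - 1) else A1 $$ (r, c))"
    unfolding A2_def by (rule swap_col_to_front_result[OF A1c j])
  then have A2c: "A2 \<in> carrier_mat (Suc m) (Suc m)" by auto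
  have "det A2 = (-1) ^ j * ((-1) ^ i * det A)"
    unfolding A2_def A1_def
    using swap_col_to_front_det[OF A1c[unfolded A1_def] j] swap_row_to_front_det[OF A i] by simp
  moreover have "A2 $$ (0, 0) = A $$ (i, j)" using i j by (simp add: A2 A1)
  moreover have "mat m m (\<lambda>(r, c). A2 $$ (0, 0) * A2 $$ (Suc r, Suc c) - A2 $$ (Suc r, 0) * A2 $$ (0, Suc c))
    = mat m m (\<lambda>(r, c). A $$ (i, j) * A $$ (insert_index i r, insert_index j c)
        - A $$ (insert_index i r, j) * A $$ (i, insert_index j c))"
    by (rule eq_matI) (use i j in \<open>auto simp: A2 A1 insert_index_def\<close>)
  ultimately show ?thesis
    using chio_condensation_first[OF A2c] by (simp add: power_add ac_simps)
qed

lemma det_scale_rows: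
  fixes x :: "nat \<Rightarrow> nat \<Rightarrow> 'a::comm_ring_1"
  shows "det (mat n n (\<lambda>(r, c). d r * x r c)) = (\<Prod>r<n. d r) * det (mat n n (\<lambda>(r, c). x r c))"
proof -
  define D :: "'a mat" where "D = mat n n (\<lambda>(i, j). if i = j then d i else 0)"
  define X where "X = mat n n (\<lambda>(r, c). x r c)"
  have D: "D \<in> carrier_mat n n" and X: "X \<in> carrier_mat n n" unfolding D_def X_def by auto
  have "det D = (\<Prod>r<n. d r)"
    by (subst det_upper_triangular[OF _ D])
      (auto simp: D_def prod_list_diag_prod atLeast0LessThan)
  moreover have "D * X = mat n n (\<lambda>(r, c). d r * x r c)"
  proof (rule eq_matI)
    fix r c assume "r < dim_row (mat n n (\<lambda>(r, c). d r * x r c))"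
      and "c < dim_col (mat n n (\<lambda>(r, c). d r * x r c))"
    then have r: "r < n" and c: "c < n" by auto
    have "(D * X) $$ (r, c) = (\<Sum>k<n. (if r = k then d r else 0) * x k c)"
      using r c D X by (simp add: scalar_prod_def atLeast0LessThan D_def X_def)
    also have "\<dots> = (\<Sum>k<n. if k = r then d r * x r c else 0)" by (rule sum.cong) auto
    also have "\<dots> = d r * x r c" using r by simp
    finally show "(D * X) $$ (r, c) = mat n n (\<lambda>(r, c). d r * x r c) $$ (r, c)" using r c by simp
  qed (use D X in auto)
  ultimately show ?thesis using det_mult[OF D X] by (simp add: X_def)
qed

fun plist_add :: "int list \<Rightarrow> int list \<Rightarrow> int list" where
  "plist_add [] ys = ys"
| "plist_add xs [] = xs"
| "plist_add (x # xs) (y # ys) = (x + y) # plist_add xs ys"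

fun plist_mult :: "int list \<Rightarrow> int list \<Rightarrow> int list" where
  "plist_mult [] ys = []"
| "plist_mult (x # xs) ys = plist_add (map ((*) x) ys) (0 # plist_mult xs ys)"

definition plist_sub :: "int list \<Rightarrow> int list \<Rightarrow> int list" where
  "plist_sub xs ys = plist_add xs (map uminus ys)"

definition plist_is0 :: "int list \<Rightarrow> bool" where
  "plist_is0 xs \<longleftrightarrow> list_all ((=) 0) xs"

lemma Poly_plist_add [simp]: "Poly (plist_add xs ys) = Poly xs + Poly ys"
  by (induction xs ys rule: plist_add.induct) auto

lemma Poly_map_times: "Poly (map ((*) x) ys) = smult x (Poly ys)"
  by (induction ys) auto

lemma Poly_plist_mult [simp]: "Poly (plist_mult xs ys) = Poly xs * Poly ys"
  by (induction xs) (auto simp: Poly_map_times mult_pCons_left)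

lemma Poly_plist_sub [simp]: "Poly (plist_sub xs ys) = Poly xs - Poly ys"
proof -
  have "Poly (map uminus ys) = - Poly ys" by (induction ys) auto
  then show ?thesis by (simp add: plist_sub_def)
qed

lemma plist_is0_iff: "plist_is0 xs \<longleftrightarrow> Poly xs = 0"
  unfolding plist_is0_def by (induction xs) auto

lemma Poly_foldr_plist_add: "Poly (foldr plist_add xss []) = (\<Sum>xs\<leftarrow>xss. Poly xs)"
  by (induction xss) auto

lemma Poly_strip_zeros [simp]: "Poly (strip_while ((=) 0) xs) = Poly xs"
  by (metis Poly_coeffs coeffs_Poly)

lemma Poly_replicate_zeros: "Poly (replicate k 0 @ xs) = [:0, 1:] ^ k * Poly xs"
  by (induction k) (auto simp: mult_pCons_left)

lemma Poly_drop_zeros: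
  assumes "take k xs = replicate k 0"
  shows "Poly xs = [:0, 1:] ^ k * Poly (drop k xs)"
  by (metis Poly_replicate_zeros append_take_drop_id assms)

text \<open>Power series division of \<open>c\<close> by \<open>q\<close>: it returns the quotient whenever the division is
  exact, and the elimination below checks exactness instead of relying on it.\<close>

fun plist_series_quot :: "nat \<Rightarrow> int list \<Rightarrow> int list \<Rightarrow> int list" where
  "plist_series_quot 0 c q = []"
| "plist_series_quot (Suc n) [] q = []"
| "plist_series_quot (Suc n) (c # cs) q =
     (c div hd q) # plist_series_quot n (tl (plist_sub (c # cs) (map ((*) (c div hd q)) q))) q"

definition plist_quot :: "int list \<Rightarrow> int list \<Rightarrow> int list" where
  "plist_quot c q = strip_while ((=) 0) (plist_series_quot (length c)
     (drop (length (takeWhile ((=) 0) q)) c) (dropWhile ((=) 0) q))"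

definition lmat_square :: "nat \<Rightarrow> 'a list list \<Rightarrow> bool" where
  "lmat_square n A \<longleftrightarrow> length A = n \<and> (\<forall>R \<in> set A. length R = n)"

definition mat_of_lists :: "int list list list \<Rightarrow> int poly mat" where
  "mat_of_lists A = mat (length A) (length A) (\<lambda>(r, c). Poly (A ! r ! c))"

lemma lmat_square_iff:
  "lmat_square n A \<longleftrightarrow> length A = n \<and> (\<forall>r < n. length (A ! r) = n)"
  unfolding lmat_square_def by (metis in_set_conv_nth)

lemma det_mat_of_lists_smult:
  assumes "lmat_square n B" "lmat_square n C"
    and "\<And>r c. r < n \<Longrightarrow> c < n \<Longrightarrow> Poly (C ! r ! c) = q * Poly (B ! r ! c)"
  shows "det (mat_of_lists C) = q ^ n * det (mat_of_lists B)"
proof -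
  have "mat_of_lists C = q \<cdot>\<^sub>m mat_of_lists B"
    using assms by (intro eq_matI) (auto simp: mat_of_lists_def lmat_square_def)
  then show ?thesis using assms(1) by (simp add: mat_of_lists_def lmat_square_def)
qed

section \<open>Fraction-free elimination\<close>

definition del_nth :: "nat \<Rightarrow> 'a list \<Rightarrow> 'a list" where
  "del_nth i xs = take i xs @ drop (Suc i) xs"

lemma length_del_nth [simp]: "i < length xs \<Longrightarrow> length (del_nth i xs) = length xs - 1"
  by (simp add: del_nth_def)

lemma nth_del_nth: "i < length xs \<Longrightarrow> r < length xs - 1 \<Longrightarrow> del_nth i xs ! r = xs ! insert_index i r"
  by (auto simp: del_nth_def insert_index_def nth_append min_def)

definition condense :: "int list list list \<Rightarrow> nat \<Rightarrow> nat \<Rightarrow> int list list list" where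
  "condense A i j = map (\<lambda>R. map2 (\<lambda>a b. strip_while ((=) 0)
       (plist_sub (plist_mult (A ! i ! j) a) (plist_mult (R ! j) b)))
     (del_nth j R) (del_nth j (A ! i))) (del_nth i A)"

lemma condense_square:
  assumes "lmat_square n A" "i < n" "j < n"
  shows "lmat_square (n - 1) (condense A i j)"
  using assms by (auto simp: lmat_square_iff condense_def nth_del_nth insert_index_def)

lemma Poly_condense_nth:
  assumes "lmat_square n A" "i < n" "j < n" "r < n - 1" "c < n - 1"
  shows "Poly (condense A i j ! r ! c) = Poly (A ! i ! j) * Poly (A ! insert_index i r ! insert_index j c)
    - Poly (A ! insert_index i r ! j) * Poly (A ! i ! insert_index j c)"
proof -
  have "insert_index i r < n" using assms(4) by (auto simp: insert_index_def)
  with assms show ?thesis by (auto simp: lmat_square_iff condense_def nth_del_nth)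
qed

lemma det_condense:
  assumes A: "lmat_square (Suc m) A" and i: "i < Suc m" and j: "j < Suc m"
  shows "(-1) ^ (i + j) * Poly (A ! i ! j) ^ m * det (mat_of_lists A)
    = Poly (A ! i ! j) * det (mat_of_lists (condense A i j))"
proof -
  have lA: "length A = Suc m" using A by (simp add: lmat_square_def)
  have M: "mat_of_lists A \<in> carrier_mat (Suc m) (Suc m)" by (simp add: mat_of_lists_def lA)
  have ins: "insert_index i r < Suc m" "insert_index j r < Suc m" if "r < m" for r
    using that by (auto simp: insert_index_def)
  have "mat m m (\<lambda>(r, c). mat_of_lists A $$ (i, j) * mat_of_lists A $$ (insert_index i r, insert_index j c)
      - mat_of_lists A $$ (insert_index i r, j) * mat_of_lists A $$ (i, insert_index j c))
    = mat_of_lists (condense A i j)"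
    using condense_square[OF A i j] Poly_condense_nth[OF A i j] i j ins
    by (intro eq_matI) (auto simp: mat_of_lists_def lmat_square_def lA)
  with chio_condensation[OF M i j] show ?thesis
    using i j by (simp add: mat_of_lists_def lA)
qed

text \<open>\<open>t ^ t_order R\<close> is the largest power of \<open>t\<close> dividing every entry of the row \<open>R\<close>.\<close>

definition t_order :: "int list list \<Rightarrow> nat" where
  "t_order R = (case map (\<lambda>e. length (takeWhile ((=) 0) e)) (filter (Not \<circ> plist_is0) R) of
     [] \<Rightarrow> 0 | ks \<Rightarrow> min_list ks)"

definition strip_t :: "int list list \<Rightarrow> int list list" where
  "strip_t R = map (drop (t_order R)) R"

lemma take_replicate_zero:
  assumes "k \<le> length (takeWhile ((=) 0) xs)"
  shows "take k xs = replicate k (0::int)"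
proof (rule nth_equalityI)
  have "length (takeWhile ((=) 0) xs) \<le> length xs" by (rule length_takeWhile_le)
  with assms show "length (take k xs) = length (replicate k 0)" by simp
  fix r assume "r < length (take k xs)"
  with assms have "xs ! r \<in> set (takeWhile ((=) 0) xs)"
    by (metis length_take min_less_iff_conj nth_mem order_less_le_trans takeWhile_nth)
  with \<open>r < length (take k xs)\<close> show "take k xs ! r = replicate k 0 ! r"
    by (auto dest: set_takeWhileD)
qed

lemma Poly_strip_t:
  assumes "e \<in> set R"
  shows "Poly e = [:0, 1:] ^ t_order R * Poly (drop (t_order R) e)"
proof (cases "plist_is0 e")
  case True
  then have "plist_is0 (drop (t_order R) e)"
    by (auto simp: plist_is0_def list_all_iff dest: in_set_dropD)
  with True show ?thesis by (simp add: plist_is0_iff)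
next
  case False
  define ks where "ks = map (\<lambda>e. length (takeWhile ((=) 0) e)) (filter (Not \<circ> plist_is0) R)"
  have e: "length (takeWhile ((=) 0) e) \<in> set ks" using False assms by (auto simp: ks_def)
  then have "t_order R = Min (set ks)"
    by (cases ks) (auto simp: t_order_def ks_def[symmetric] min_list_Min simp del: min_list.simps)
  with e have "t_order R \<le> length (takeWhile ((=) 0) e)" by simp
  then show ?thesis by (intro Poly_drop_zeros take_replicate_zero)
qed

lemma det_strip_t:
  assumes "lmat_square n A"
  shows "det (mat_of_lists A) = [:0, 1:] ^ (\<Sum>R\<leftarrow>A. t_order R) * det (mat_of_lists (map strip_t A))"
proof -
  have lA: "length A = n" using assms by (simp add: lmat_square_def)
  have eq1: "mat_of_lists A = mat n n (\<lambda>(r, c). [:0, 1:] ^ t_order (A ! r) * Poly (strip_t (A ! r) ! c))"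
    using assms by (intro eq_matI) (auto simp: mat_of_lists_def lmat_square_iff strip_t_def
      intro: Poly_strip_t)
  have eq2: "mat n n (\<lambda>(r, c). Poly (strip_t (A ! r) ! c)) = mat_of_lists (map strip_t A)"
    by (intro eq_matI) (auto simp: mat_of_lists_def lA)
  have "det (mat_of_lists A)
      = (\<Prod>r<n. [:0, 1:] ^ t_order (A ! r)) * det (mat_of_lists (map strip_t A))"
    unfolding eq1 eq2[symmetric] by (rule det_scale_rows)
  then show ?thesis
    by (simp add: power_sum[symmetric] sum_list_sum_nth atLeast0LessThan lA)
qed

lemma lmat_square_list_all2: "list_all2 (list_all2 P) B C \<Longrightarrow> lmat_square n C \<Longrightarrow> lmat_square n B"
  by (auto simp: lmat_square_iff list_all2_conv_all_nth)

lemma det_exact_condense: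
  assumes A: "lmat_square (Suc (Suc m)) A" and i: "i < Suc (Suc m)" and j: "j < Suc (Suc m)"
    and p: "Poly (A ! i ! j) \<noteq> 0"
    and BC: "list_all2 (list_all2 (\<lambda>b e. plist_is0 (plist_sub (plist_mult q b) e))) B (condense A i j)"
    and detB: "det (mat_of_lists B) = smult s (Poly (A ! i ! j) ^ m * [:0, 1:] ^ k * Poly f)"
  shows "det (mat_of_lists A) = smult ((-1) ^ (i + j) * s) (Poly q ^ Suc m * [:0, 1:] ^ k * Poly f)"
proof -
  define P where "P = Poly (A ! i ! j)"
  define X where "X = Poly q ^ Suc m * [:0, 1:] ^ k * Poly f"
  have sqC: "lmat_square (Suc m) (condense A i j)" using condense_square[OF A i j] by simp
  have sqB: "lmat_square (Suc m) B" by (rule lmat_square_list_all2[OF BC sqC])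
  have "Poly (condense A i j ! r ! c) = Poly q * Poly (B ! r ! c)" if "r < Suc m" "c < Suc m" for r c
    using BC that sqB by (auto simp: list_all2_conv_all_nth lmat_square_iff plist_is0_iff)
  then have detC: "det (mat_of_lists (condense A i j)) = Poly q ^ Suc m * det (mat_of_lists B)"
    by (rule det_mat_of_lists_smult[OF sqB sqC])
  have "(-1) ^ (i + j) * P ^ Suc m * det (mat_of_lists A) = P * det (mat_of_lists (condense A i j))"
    using det_condense[OF A i j] by (simp add: P_def)
  also have "\<dots> = P ^ Suc m * smult s X" by (simp add: detC detB P_def X_def ac_simps)
  finally have "P ^ Suc m * ((-1) ^ (i + j) * det (mat_of_lists A)) = P ^ Suc m * smult s X"
    by (simp add: ac_simps)
  then have "(-1) ^ (i + j) * det (mat_of_lists A) = smult s X"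
    by (rule mult_left_cancel[THEN iffD1, OF power_not_zero[OF p[folded P_def]]])
  moreover have "(-1 :: int poly) ^ n = [:(-1) ^ n:]" for n by (induction n) auto
  ultimately have sign: "smult ((-1) ^ (i + j)) (det (mat_of_lists A)) = smult s X"
    by (simp add: mult_pCons_left)
  have "det (mat_of_lists A) = smult ((-1) ^ (i + j) * (-1) ^ (i + j)) (det (mat_of_lists A))"
    by (simp flip: power_mult_distrib)
  also have "\<dots> = smult ((-1) ^ (i + j) * s) X" by (simp only: smult_smult[symmetric] sign)
  finally show ?thesis unfolding X_def .
qed

definition pivot :: "int list list list \<Rightarrow> nat \<times> nat" where
  "pivot A = (let unit = (\<lambda>e. e = [1] \<or> e = [-1]) in
     case find (\<lambda>(i, R). list_ex unit R) (zip [0..<length A] A) of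
       Some (i, R) \<Rightarrow> (i, length (takeWhile (Not \<circ> unit) R))
     | None \<Rightarrow> (0, length (takeWhile plist_is0 (hd A))))"

text \<open>Bareiss' fraction-free elimination: each condensed matrix is divided exactly by the previous
  pivot \<open>q\<close>, and exactness is checked. While \<open>q = \<plusminus>1\<close>, rows are first divided by powers of \<open>t\<close>
  and pivots \<open>\<plusminus>1\<close> are preferred, which keeps the degrees low; correctness does not depend on
  these choices.\<close>

function ff_det :: "int list \<Rightarrow> int list list list \<Rightarrow> (int \<times> nat \<times> int list) option" where
  "ff_det q A =
    (if length A \<le> 1 then (if A = [[hd (hd A)]] then Some (1, 0, hd (hd A)) else None)
     else let q_unit = (q = [1] \<or> q = [-1]);
              k = (if q_unit then (\<Sum>R\<leftarrow>A. t_order R) else 0);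
              A' = (if q_unit then map strip_t A else A);
              (i, j) = pivot A';
              C = condense A' i j;
              B = map (map (\<lambda>e. plist_quot e q)) C in
       if i < length A \<and> j < length A \<and> \<not> plist_is0 (A' ! i ! j)
          \<and> list_all2 (list_all2 (\<lambda>b e. plist_is0 (plist_sub (plist_mult q b) e))) B C
       then map_option (\<lambda>(s, k', f). ((-1) ^ (i + j) * s, k + k', f)) (ff_det (A' ! i ! j) B)
       else None)"
  by pat_completeness auto
termination
  by (relation "measure (\<lambda>(q, A). length A)") (auto simp: condense_def list_all2_lengthD)

lemma ff_det_correct:
  assumes "ff_det q A = Some (s, k, f)" "lmat_square (length A) A" "Poly q \<noteq> 0"
  shows "det (mat_of_lists A) = smult s (Poly q ^ (length A - 1) * [:0, 1:] ^ k * Poly f)"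
  using assms
proof (induction q A arbitrary: s k f rule: ff_det.induct)
  case (1 q A)
  show ?case
  proof (cases "length A \<le> 1")
    case True
    with "1.prems"(1) have "A = [[f]]" "s = 1" "k = 0" by (auto split: if_splits)
    then show ?thesis by (simp add: det_single mat_of_lists_def)
  next
    case False
    define m where "m = length A - 2"
    have n: "length A = Suc (Suc m)" using False by (simp add: m_def)
    define q_unit where "q_unit = (q = [1] \<or> q = [-1])"
    define K where "K = (if q_unit then (\<Sum>R\<leftarrow>A. t_order R) else 0)"
    define A' where "A' = (if q_unit then map strip_t A else A)"
    obtain i j where ij: "(i, j) = pivot A'" by (metis surj_pair)
    define C where "C = condense A' i j"
    define B where "B = map (map (\<lambda>e. plist_quot e q)) C"
    define checks where "checks \<longleftrightarrow> i < length A \<and> j < length A \<and> \<not> plist_is0 (A' ! i ! j)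
      \<and> list_all2 (list_all2 (\<lambda>b e. plist_is0 (plist_sub (plist_mult q b) e))) B C"
    have "ff_det q A = (if checks then map_option (\<lambda>(s, k', f). ((-1) ^ (i + j) * s, K + k', f))
        (ff_det (A' ! i ! j) B) else None)"
      using False ij[symmetric] unfolding checks_def B_def C_def A'_def K_def q_unit_def
      by (subst ff_det.simps) (simp add: Let_def del: ff_det.simps)
    with "1.prems"(1) obtain s' k' where checks and s: "s = (-1) ^ (i + j) * s'"
      and k: "k = K + k'" and rec: "ff_det (A' ! i ! j) B = Some (s', k', f)"
      by (auto split: if_splits simp del: ff_det.simps)
    then have i: "i < Suc (Suc m)" and j: "j < Suc (Suc m)" and p: "Poly (A' ! i ! j) \<noteq> 0"
      and BC: "list_all2 (list_all2 (\<lambda>b e. plist_is0 (plist_sub (plist_mult q b) e))) B C"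
      by (auto simp: checks_def n plist_is0_iff)
    have sqA: "lmat_square (Suc (Suc m)) A" using "1.prems"(2) n by simp
    then have sqA': "lmat_square (Suc (Suc m)) A'"
      by (auto simp: A'_def lmat_square_def strip_t_def)
    have "lmat_square (Suc m) B"
      using lmat_square_list_all2[OF BC] condense_square[OF sqA' i j] by (simp add: C_def)
    then have "det (mat_of_lists B) = smult s' (Poly (A' ! i ! j) ^ m * [:0, 1:] ^ k' * Poly f)"
      using "1.IH"[OF False q_unit_def K_def A'_def refl ij C_def B_def \<open>checks\<close>[unfolded checks_def] rec] p
      by (simp add: lmat_square_def)
    then have "det (mat_of_lists A') = smult s (Poly q ^ Suc m * [:0, 1:] ^ k' * Poly f)"
      unfolding s by (rule det_exact_condense[OF sqA' i j p BC[unfolded C_def]])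
    moreover have "det (mat_of_lists A) = [:0, 1:] ^ K * det (mat_of_lists A')"
      using det_strip_t[OF sqA] by (simp add: K_def A'_def)
    ultimately show ?thesis by (simp add: k n power_add ac_simps)
  qed
qed

corollary ff_det_one:
  assumes "ff_det [1] A = Some (s, k, f)" "lmat_square (length A) A"
  shows "det (mat_of_lists A) = smult s ([:0, 1:] ^ k * Poly f)"
  using ff_det_correct[OF assms] by (simp flip: one_pCons)

interpretation polyQt: comm_ring_hom polyQt
  by unfold_locales (simp_all add: polyQt_def One_fract_def Zero_fract_def[symmetric])

declare polyQt.hom_add [simp] polyQt.hom_mult [simp] polyQt.hom_uminus [simp] polyQt.hom_minus [simp]

lemma polyQt_eq_iff: "polyQt p = polyQt q \<longleftrightarrow> p = q"
  by (simp add: polyQt_def eq_fract)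

lemma polyQt_eq_0_iff [simp]: "polyQt p = 0 \<longleftrightarrow> p = 0"
  using polyQt_eq_iff[of p 0] by simp

lemma polyQt_const [simp]: "polyQt [:c:] = of_int c"
  by (metis of_int_eq_id id_apply of_int_poly polyQt.hom_of_int)

lemma polyQt_smult [simp]: "polyQt (smult c p) = of_int c * polyQt p"
proof -
  have "smult c p = [:c:] * p" by simp
  then show ?thesis by (simp only: polyQt.hom_mult polyQt_const)
qed

lemma polyQt_t [simp]: "polyQt [:0, 1:] = tvar"
  by (simp add: polyQt_def tvar_def)

lemma polyQt_t_power [simp]: "polyQt ([:0, 1:] ^ n) = tvar ^ n"
  by (simp add: polyQt.hom_power)

lemma tvar_nonzero [simp]: "tvar \<noteq> 0"
  by (simp add: tvar_def eq_fract Zero_fract_def)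

lemma tvar_cancel: "tvar * (inverse tvar * x) = x" "tvar * inverse tvar = 1"
  by (simp_all add: mult.assoc[symmetric])

definition qmat :: "int list list list \<Rightarrow> Qt mat" where
  "qmat A = map_mat polyQt (mat_of_lists A)"

lemma qmat_carrier: "lmat_square n A \<Longrightarrow> qmat A \<in> carrier_mat n n"
  by (simp add: qmat_def mat_of_lists_def lmat_square_def)

lemma qmat_nth: "lmat_square n A \<Longrightarrow> r < n \<Longrightarrow> c < n \<Longrightarrow> qmat A $$ (r, c) = polyQt (Poly (A ! r ! c))"
  by (simp add: qmat_def mat_of_lists_def lmat_square_def)

section \<open>Fox calculus on coefficient lists\<close>

definition lmat_diag :: "int list \<Rightarrow> int list list list" where
  "lmat_diag p = [[p, [], []], [[], p, []], [[], [], p]]"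

definition lmat_add :: "int list list list \<Rightarrow> int list list list \<Rightarrow> int list list list" where
  "lmat_add A B = map2 (map2 plist_add) A B"

definition lmat_smult :: "int list \<Rightarrow> int list list list \<Rightarrow> int list list list" where
  "lmat_smult p A = map (map (plist_mult p)) A"

definition lmat_mult :: "int list list list \<Rightarrow> int list list list \<Rightarrow> int list list list" where
  "lmat_mult A B = map (\<lambda>R. map (\<lambda>c.
     foldr plist_add (map (\<lambda>k. plist_mult (R ! k) (B ! k ! c)) [0..<length B]) []) [0..<length B]) A"

definition rho_lmat :: "(3 \<Rightarrow> 3) \<Rightarrow> int list list list" where
  "rho_lmat g = map (\<lambda>r. map (\<lambda>c. if g (of_nat c) = of_nat r then [1] else []) [0..<3]) [0..<3]"

lemma lmat_square_diag: "lmat_square 3 (lmat_diag p)"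
  by (simp add: lmat_square_def lmat_diag_def)

lemma lmat_square_add: "lmat_square n A \<Longrightarrow> lmat_square n B \<Longrightarrow> lmat_square n (lmat_add A B)"
  by (auto simp: lmat_square_iff lmat_add_def)

lemma lmat_square_smult: "lmat_square n A \<Longrightarrow> lmat_square n (lmat_smult p A)"
  by (auto simp: lmat_square_def lmat_smult_def)

lemma lmat_square_mult: "lmat_square n A \<Longrightarrow> lmat_square n B \<Longrightarrow> lmat_square n (lmat_mult A B)"
  by (auto simp: lmat_square_def lmat_mult_def)

lemma lmat_square_rho: "lmat_square 3 (rho_lmat g)"
  by (simp add: lmat_square_def rho_lmat_def)

lemma qmat_diag: "qmat (lmat_diag p) = polyQt (Poly p) \<cdot>\<^sub>m 1\<^sub>m 3"
proof (rule eq_matI)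
  fix i j assume "i < dim_row (polyQt (Poly p) \<cdot>\<^sub>m 1\<^sub>m 3)" "j < dim_col (polyQt (Poly p) \<cdot>\<^sub>m 1\<^sub>m 3)"
  then have i: "i < 3" and j: "j < 3" by auto
  then have "qmat (lmat_diag p) $$ (i, j) = polyQt (Poly (lmat_diag p ! i ! j))"
    by (rule qmat_nth[OF lmat_square_diag])
  with i j show "qmat (lmat_diag p) $$ (i, j) = (polyQt (Poly p) \<cdot>\<^sub>m 1\<^sub>m 3) $$ (i, j)"
    by (auto simp: lmat_diag_def less_Suc_eq numeral_3_eq_3)
qed (use qmat_carrier[OF lmat_square_diag] in auto)

lemma qmat_add: "lmat_square n A \<Longrightarrow> lmat_square n B \<Longrightarrow> qmat (lmat_add A B) = qmat A + qmat B"
  by (rule eq_matI) (auto simp: qmat_def mat_of_lists_def lmat_square_iff lmat_add_def)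

lemma qmat_smult: "lmat_square n A \<Longrightarrow> qmat (lmat_smult p A) = polyQt (Poly p) \<cdot>\<^sub>m qmat A"
  by (rule eq_matI) (auto simp: qmat_def mat_of_lists_def lmat_square_iff lmat_smult_def)

lemma qmat_mult:
  assumes A: "lmat_square n A" and B: "lmat_square n B"
  shows "qmat (lmat_mult A B) = qmat A * qmat B"
proof (rule eq_matI)
  fix r c assume "r < dim_row (qmat A * qmat B)" "c < dim_col (qmat A * qmat B)"
  then have r: "r < n" and c: "c < n" using qmat_carrier[OF A] qmat_carrier[OF B] by auto
  have "qmat (lmat_mult A B) $$ (r, c) = polyQt (Poly (lmat_mult A B ! r ! c))"
    by (rule qmat_nth[OF lmat_square_mult[OF A B] r c])
  also have "\<dots> = polyQt (\<Sum>k\<leftarrow>[0..<n]. Poly (A ! r ! k) * Poly (B ! k ! c))"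
    using r c A B by (simp add: lmat_mult_def Poly_foldr_plist_add lmat_square_def o_def)
  also have "\<dots> = (\<Sum>k<n. qmat A $$ (r, k) * qmat B $$ (k, c))"
    using r c A B by (simp add: qmat_nth polyQt.hom_sum sum_set_upt_conv_sum_list_nat[symmetric]
      atLeast0LessThan)
  finally show "qmat (lmat_mult A B) $$ (r, c) = (qmat A * qmat B) $$ (r, c)"
    using qmat_carrier[OF A] qmat_carrier[OF B] r c
    by (simp add: scalar_prod_def atLeast0LessThan)
qed (use lmat_square_mult[OF A B] qmat_carrier[OF A] qmat_carrier[OF B] qmat_carrier in auto)

lemma qmat_rho: "qmat (rho_lmat g) = rho g"
  by (rule eq_matI) (auto simp: qmat_def mat_of_lists_def rho_lmat_def rho_def)

definition neg_count :: "letter list \<Rightarrow> nat" where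
  "neg_count w = length (filter (Not \<circ> snd) w)"

text \<open>\<open>fox_lists R R' w j\<close> is the image of the Fox derivative \<open>\<partial>w/\<partial>g\<^sub>j\<close> multiplied by
  \<open>t ^ neg_count w\<close>, which clears the denominators; \<open>R h\<close> and \<open>R' h\<close> stand for \<open>\<rho>(\<alpha>(g\<^sub>h))\<close>
  and \<open>\<rho>(\<alpha>(g\<^sub>h)\<^sup>-\<^sup>1)\<close>.\<close>

fun fox_lists :: "(nat \<Rightarrow> int list list list) \<Rightarrow> (nat \<Rightarrow> int list list list) \<Rightarrow> letter list \<Rightarrow> nat
    \<Rightarrow> int list list list" where
  "fox_lists R R' [] j = lmat_diag []"
| "fox_lists R R' ((h, True) # w) j =
     lmat_add (lmat_diag (if h = j then replicate (neg_count w) 0 @ [1] else []))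
       (lmat_mult (lmat_smult [0, 1] (R h)) (fox_lists R R' w j))"
| "fox_lists R R' ((h, False) # w) j =
     lmat_add (lmat_smult (if h = j then replicate (neg_count w) 0 @ [-1] else []) (R' h))
       (lmat_mult (R' h) (fox_lists R R' w j))"

lemma fox_twisted_carrier: "fox_twisted a w j \<in> carrier_mat 3 3"
  by (induction w) (auto simp: twist_letter_def rho_def)

lemma fox_lists_square:
  assumes "\<And>h. lmat_square 3 (R h)" "\<And>h. lmat_square 3 (R' h)"
  shows "lmat_square 3 (fox_lists R R' w j)"
  using assms by (induction R R' w j rule: fox_lists.induct)
    (auto intro!: lmat_square_add lmat_square_mult lmat_square_smult lmat_square_diag)

lemma fox_lists_correct:
  assumes sq: "\<And>h. lmat_square 3 (R h)" "\<And>h. lmat_square 3 (R' h)"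
    and rep: "\<And>h. qmat (R h) = rho (a h)" "\<And>h. qmat (R' h) = rho (inv_into UNIV (a h))"
  shows "qmat (fox_lists R R' w j) = tvar ^ neg_count w \<cdot>\<^sub>m fox_twisted a w j"
proof (induction w)
  case Nil
  show ?case by (auto simp: qmat_diag)
next
  case (Cons l w)
  obtain h b where l: "l = (h, b)" by fastforce
  define F where "F = fox_lists R R' w j"
  have F: "lmat_square 3 F" unfolding F_def by (rule fox_lists_square[OF sq])
  note carriers = fox_twisted_carrier[of a w j] qmat_carrier[OF sq(1)] qmat_carrier[OF sq(2)]
  note qmat_simps = qmat_add[of 3] qmat_diag qmat_mult[of 3] qmat_smult[of 3] lmat_square_add[of 3]
    lmat_square_diag lmat_square_mult[of 3] lmat_square_smult[of 3] Poly_replicate_zeros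
  show ?case
  proof (cases b)
    case True
    have "qmat (fox_lists R R' (l # w) j) = (if h = j then tvar ^ neg_count w else 0) \<cdot>\<^sub>m 1\<^sub>m 3
        + (tvar \<cdot>\<^sub>m rho (a h)) * (tvar ^ neg_count w \<cdot>\<^sub>m fox_twisted a w j)"
      using F sq by (simp add: l True F_def[symmetric] qmat_simps Cons.IH[folded F_def] rep)
    also have "\<dots> = tvar ^ neg_count (l # w) \<cdot>\<^sub>m fox_twisted a (l # w) j"
      using carriers by (intro eq_matI)
        (auto simp: l True neg_count_def twist_letter_def rho_def scalar_prod_def
          sum_distrib_left algebra_simps)
    finally show ?thesis .
  next
    case False
    have "qmat (fox_lists R R' (l # w) j)
        = (if h = j then - (tvar ^ neg_count w) else 0) \<cdot>\<^sub>m rho (inv_into UNIV (a h))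
          + rho (inv_into UNIV (a h)) * (tvar ^ neg_count w \<cdot>\<^sub>m fox_twisted a w j)"
      using F sq by (simp add: l False F_def[symmetric] qmat_simps Cons.IH[folded F_def] rep)
    also have "\<dots> = tvar ^ neg_count (l # w) \<cdot>\<^sub>m fox_twisted a (l # w) j"
      using carriers by (intro eq_matI)
        (auto simp: l False neg_count_def twist_letter_def rho_def scalar_prod_def
          sum_distrib_left algebra_simps tvar_cancel)
    finally show ?thesis .
  qed
qed

definition fox_block_lists :: "(nat \<Rightarrow> int list list list) \<Rightarrow> (nat \<Rightarrow> int list list list) \<Rightarrow> nat
    \<Rightarrow> int list list list" where
  "fox_block_lists R R' i =
     (let F = map (\<lambda>rel. map (fox_lists R R' rel) [0..<K_ngens]) K_relators in
      map (\<lambda>r. map (\<lambda>c. strip_while ((=) 0)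
          (F ! (r div 3) ! (if c div 3 < i then c div 3 else c div 3 + 1) ! (r mod 3) ! (c mod 3)))
        [0..<3 * length K_relators]) [0..<3 * length K_relators])"

lemma fox_block_lists_correct:
  assumes sq: "\<And>h. lmat_square 3 (R h)" "\<And>h. lmat_square 3 (R' h)"
    and rep: "\<And>h. qmat (R h) = rho (a h)" "\<And>h. qmat (R' h) = rho (inv_into UNIV (a h))"
  shows "lmat_square 30 (fox_block_lists R R' i)
    \<and> qmat (fox_block_lists R R' i) = tvar ^ 2 \<cdot>\<^sub>m fox_block_matrix a i"
proof
  have len: "length K_relators = 10" "K_ngens = 11" by (simp_all add: K_relators_def K_ngens_def)
  show sq30: "lmat_square 30 (fox_block_lists R R' i)"
    by (simp add: fox_block_lists_def lmat_square_def len)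
  show "qmat (fox_block_lists R R' i) = tvar ^ 2 \<cdot>\<^sub>m fox_block_matrix a i"
  proof (rule eq_matI)
    fix r c assume "r < dim_row (tvar ^ 2 \<cdot>\<^sub>m fox_block_matrix a i)"
      and "c < dim_col (tvar ^ 2 \<cdot>\<^sub>m fox_block_matrix a i)"
    then have r: "r < 30" and c: "c < 30" by (simp_all add: fox_block_matrix_def len)
    define rel where "rel = K_relators ! (r div 3)"
    define col where "col = (if c div 3 < i then c div 3 else c div 3 + 1)"
    have "\<forall>w \<in> set K_relators. neg_count w = 2" by (simp add: K_relators_def neg_count_def)
    moreover have "rel \<in> set K_relators" using r by (simp add: rel_def len)
    ultimately have rel: "neg_count rel = 2" by blast
    have col: "col < K_ngens" using c by (auto simp: col_def len)
    have "fox_block_lists R R' i ! r ! c = strip_while ((=) 0) (fox_lists R R' rel col ! (r mod 3) ! (c mod 3))"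
      using r c col by (auto simp: fox_block_lists_def len Let_def rel_def col_def)
    then have "qmat (fox_block_lists R R' i) $$ (r, c)
        = polyQt (Poly (fox_lists R R' rel col ! (r mod 3) ! (c mod 3)))"
      using qmat_nth[OF sq30 r c] by simp
    also have "\<dots> = qmat (fox_lists R R' rel col) $$ (r mod 3, c mod 3)"
      by (rule qmat_nth[symmetric, OF fox_lists_square[OF sq]]) auto
    also have "\<dots> = tvar ^ 2 * fox_twisted a rel col $$ (r mod 3, c mod 3)"
      using fox_lists_correct[of R R' a rel col, OF sq rep] fox_twisted_carrier[of a rel col] rel
      by simp
    finally show "qmat (fox_block_lists R R' i) $$ (r, c) = (tvar ^ 2 \<cdot>\<^sub>m fox_block_matrix a i) $$ (r, c)"
      using r c by (simp add: fox_block_matrix_def len rel_def col_def Let_def)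
  qed (simp_all add: qmat_def mat_of_lists_def fox_block_matrix_def fox_block_lists_def len)
qed

lemma alexander_denominator_eq:
  assumes "lmat_square 3 (R i)" "qmat (R i) = rho (a i)"
  shows "1\<^sub>m 3 - twist_letter a (i, True) = qmat (lmat_add (lmat_diag [1]) (lmat_smult [0, -1] (R i)))"
proof -
  have "[:0, -1:] = - [:0, 1::int:]" by simp
  then have "polyQt [:0, -1:] = - tvar" by (metis polyQt.hom_uminus polyQt_t)
  with assms show ?thesis
    by (intro eq_matI) (auto simp: qmat_add[of 3] qmat_diag qmat_smult lmat_square_diag
      lmat_square_smult twist_letter_def rho_def)
qed

lemma twisted_alexander_eq_dets:
  assumes sq: "\<And>h. lmat_square 3 (R h)" "\<And>h. lmat_square 3 (R' h)"
    and rep: "\<And>h. qmat (R h) = rho (a h)" "\<And>h. qmat (R' h) = rho (inv_into UNIV (a h))"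
  shows "twisted_alexander a i = polyQt (det (mat_of_lists (fox_block_lists R R' i)))
    / (tvar ^ 60 * polyQt (det (mat_of_lists (lmat_add (lmat_diag [1]) (lmat_smult [0, -1] (R i))))))"
proof -
  note block = fox_block_lists_correct[of R R' a i, OF sq rep]
  have "polyQt (det (mat_of_lists (fox_block_lists R R' i))) = det (tvar ^ 2 \<cdot>\<^sub>m fox_block_matrix a i)"
    using block by (simp add: qmat_def polyQt.hom_det[symmetric])
  also have "\<dots> = tvar ^ 60 * det (fox_block_matrix a i)"
    by (simp add: fox_block_matrix_def K_ngens_def flip: power_mult)
  finally have "det (fox_block_matrix a i) = polyQt (det (mat_of_lists (fox_block_lists R R' i))) / tvar ^ 60"
    by (simp add: field_simps)
  moreover have "det (1\<^sub>m 3 - twist_letter a (i, True))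
      = polyQt (det (mat_of_lists (lmat_add (lmat_diag [1]) (lmat_smult [0, -1] (R i)))))"
    unfolding alexander_denominator_eq[of R i a, OF sq(1) rep(1)] by (simp add: qmat_def)
  ultimately show ?thesis by (simp add: twisted_alexander_def)
qed

definition alpha_10_164 :: "nat \<Rightarrow> 3 \<Rightarrow> 3" where
  "alpha_10_164 g = (if g \<in> {0, 2, 5, 10} then D3_x \<circ> D3_y \<circ> D3_y
     else if g \<in> {1, 6, 8} then D3_x else D3_x \<circ> D3_y)"

lemma alpha_10_164_reflection:
  "alpha_10_164 g = (\<lambda>n. (if g \<in> {0, 2, 5, 10} then 2 else if g \<in> {1, 6, 8} then 0 else 1) - n)"
  by (auto simp: alpha_10_164_def D3_x_def D3_y_def fun_eq_iff algebra_simps)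

lemma inv_reflection: "inv_into UNIV (\<lambda>n::3. c - n) = (\<lambda>n. c - n)"
  by (rule inv_unique_comp) (auto simp: algebra_simps)

lemma inv_uminus_3: "inv_into UNIV (uminus :: 3 \<Rightarrow> 3) = uminus"
  using inv_reflection[of 0] by simp

lemma inv_alpha_10_164: "inv_into UNIV (alpha_10_164 g) = alpha_10_164 g"
  by (simp add: alpha_10_164_reflection inv_reflection)

lemma alpha_10_164_in_D3: "alpha_10_164 g \<in> D3"
proof -
  have "D3_x \<circ> id \<in> D3" "D3_x \<circ> (D3_y \<circ> id) \<in> D3" "D3_x \<circ> (D3_y \<circ> (D3_y \<circ> id)) \<in> D3"
    by (intro D3.intros)+
  then show ?thesis by (simp add: alpha_10_164_def comp_assoc)
qed

lemma alpha_10_164_generates_D3: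
  "d \<in> D3 \<Longrightarrow> \<exists>w. (\<forall>l \<in> set w. fst l < K_ngens) \<and> eval_word alpha_10_164 w = d"
proof (induction rule: D3.induct)
  case D3_id
  show ?case by (rule exI[of _ "[]"]) simp
next
  case (D3_mx g)
  then obtain w where "\<forall>l \<in> set w. fst l < K_ngens" "eval_word alpha_10_164 w = g" by blast
  moreover have "alpha_10_164 1 = D3_x" by (simp add: alpha_10_164_def)
  ultimately show ?case by (intro exI[of _ "(1, True) # w"]) (simp add: K_ngens_def)
next
  case (D3_my g)
  then obtain w where "\<forall>l \<in> set w. fst l < K_ngens" "eval_word alpha_10_164 w = g" by blast
  moreover have "alpha_10_164 1 \<circ> (alpha_10_164 3 \<circ> g) = D3_y \<circ> g"
    by (simp add: alpha_10_164_def D3_x_def D3_y_def fun_eq_iff)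
  ultimately show ?case by (intro exI[of _ "(1, True) # (3, True) # w"]) (simp add: K_ngens_def)
qed

lemma alpha_10_164_epi: "is_epi_D3 alpha_10_164"
proof -
  have "eval_word alpha_10_164 r = id" if "r \<in> set K_relators" for r
    using that by (auto simp: K_relators_def alpha_10_164_reflection inv_reflection inv_uminus_3
      fun_eq_iff algebra_simps)
  then show ?thesis
    unfolding is_epi_D3_def using alpha_10_164_in_D3 alpha_10_164_generates_D3 by blast
qed

text \<open>\<open>code_simp\<close> cannot evaluate arithmetic in the numeral type \<open>3\<close>, so the three permutation
  matrices are computed here once and for all.\<close>

lemma rho_lmat_alpha_10_164:
  "rho_lmat (alpha_10_164 h) =
    (if h \<in> {0, 2, 5, 10} then [[[], [], [1]], [[], [1], []], [[1], [], []]]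
     else if h \<in> {1, 6, 8} then [[[1], [], []], [[], [], [1]], [[], [1], []]]
     else [[[], [1], []], [[1], [], []], [[], [], [1]]])"
  by (simp add: rho_lmat_def alpha_10_164_reflection upt_rec)

lemma rho_lmat_alpha_10_164_rep:
  "lmat_square 3 (rho_lmat (alpha_10_164 h))"
  "qmat (rho_lmat (alpha_10_164 h)) = rho (alpha_10_164 h)"
  "qmat (rho_lmat (alpha_10_164 h)) = rho (inv_into UNIV (alpha_10_164 h))"
  by (simp_all add: lmat_square_rho qmat_rho inv_alpha_10_164)

lemma det_fox_block_alpha_10_164:
  "det (mat_of_lists (fox_block_lists (\<lambda>h. rho_lmat (alpha_10_164 h)) (\<lambda>h. rho_lmat (alpha_10_164 h)) 0))
    = [:0, 1:] ^ 24 * [:9, -33, 3, 143, -185, -110, 346, -110, -185, 143, 3, -33, 9:]"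
proof -
  define N where "N = fox_block_lists (\<lambda>h. rho_lmat (alpha_10_164 h)) (\<lambda>h. rho_lmat (alpha_10_164 h)) 0"
  define P :: "int poly" where "P = [:9, -33, 3, 143, -185, -110, 346, -110, -185, 143, 3, -33, 9:]"
  have "ff_det [1] N
      = Some (-1, 18, replicate 6 0 @ [-9, 33, -3, -143, 185, 110, -346, 110, 185, -143, -3, 33, -9])"
    unfolding N_def rho_lmat_alpha_10_164 by code_simp
  moreover have "lmat_square (length N) N"
    using fox_block_lists_correct[OF rho_lmat_alpha_10_164_rep(1,1,2,3)]
    by (simp add: N_def lmat_square_def)
  ultimately have "det (mat_of_lists N) = smult (-1) ([:0, 1:] ^ 18
      * Poly (replicate 6 0 @ [-9, 33, -3, -143, 185, 110, -346, 110, 185, -143, -3, 33, -9]))"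
    by (rule ff_det_one)
  moreover have "Poly [-9, 33, -3, -143, 185, 110, -346, 110, 185, -143, -3, 33, -9] = - P"
    by (simp add: P_def)
  ultimately show ?thesis
    unfolding N_def P_def[symmetric] by (simp only: Poly_replicate_zeros) (simp add: power_add)
qed

lemma det_alexander_denominator_alpha_10_164:
  "det (mat_of_lists (lmat_add (lmat_diag [1]) (lmat_smult [0, -1] (rho_lmat (alpha_10_164 0)))))
    = [:1, -1, -1, 1:]"
proof -
  define D where "D = lmat_add (lmat_diag [1]) (lmat_smult [0, -1] (rho_lmat (alpha_10_164 0)))"
  have "ff_det [1] D = Some (1, 0, [1, -1, -1, 1])"
    unfolding D_def rho_lmat_alpha_10_164 by code_simp
  moreover have "lmat_square (length D) D"
    using lmat_square_add[OF lmat_square_diag lmat_square_smult[OF lmat_square_rho]]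
    by (simp add: D_def lmat_square_def)
  ultimately show ?thesis unfolding D_def[symmetric] by (simp add: ff_det_one)
qed

lemma twisted_alexander_alpha_10_164:
  "twisted_alexander alpha_10_164 0
    = polyQt [:9, -33, 3, 143, -185, -110, 346, -110, -185, 143, 3, -33, 9:]
      / (tvar ^ 36 * polyQt [:1, -1, -1, 1:])"
proof -
  have "twisted_alexander alpha_10_164 0
      = polyQt ([:0, 1:] ^ 24 * [:9, -33, 3, 143, -185, -110, 346, -110, -185, 143, 3, -33, 9:])
        / (tvar ^ 60 * polyQt [:1, -1, -1, 1:])"
    using twisted_alexander_eq_dets[OF rho_lmat_alpha_10_164_rep(1,1,2,3)]
    by (simp only: det_fox_block_alpha_10_164 det_alexander_denominator_alpha_10_164)
  also have "\<dots> = (tvar ^ 24 * polyQt [:9, -33, 3, 143, -185, -110, 346, -110, -185, 143, 3, -33, 9:])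
      / (tvar ^ 24 * (tvar ^ 36 * polyQt [:1, -1, -1, 1:]))"
    by (simp only: polyQt.hom_mult polyQt_t_power mult.assoc[symmetric] power_add[symmetric]) simp
  also have "\<dots> = polyQt [:9, -33, 3, 143, -185, -110, 346, -110, -185, 143, 3, -33, 9:]
      / (tvar ^ 36 * polyQt [:1, -1, -1, 1:])"
    by (rule nonzero_mult_divide_mult_cancel_left) simp
  finally show ?thesis .
qed

lemma twisted_alexander_alpha_10_164_factored:
  "twisted_alexander alpha_10_164 0
    = tvar powi (-36) * (polyQt Alex_10_164 / polyQt [:1, -1:] * polyQt [:3, 0, -13, 0, 13, 0, -3:])"
proof -
  have "[:9, -33, 3, 143, -185, -110, 346, -110, -185, 143, 3, -33, 9:] * [:1, -1:]
      = Alex_10_164 * [:3, 0, -13, 0, 13, 0, -3:] * [:1, -1, -1, 1 :: int:]"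
    by (simp add: Alex_10_164_def)
  then have "polyQt [:9, -33, 3, 143, -185, -110, 346, -110, -185, 143, 3, -33, 9:] * polyQt [:1, -1:]
      = polyQt Alex_10_164 * polyQt [:3, 0, -13, 0, 13, 0, -3:] * polyQt [:1, -1, -1, 1:]"
    by (metis polyQt.hom_mult)
  then show ?thesis
    unfolding twisted_alexander_alpha_10_164 by (simp add: power_int_minus field_simps)
qed

section \<open>Equality up to units\<close>

lemma doteq_iff: "x \<doteq> y \<longleftrightarrow> (\<exists>k. x = tvar powi k * y \<or> x = - (tvar powi k * y))"
  unfolding doteq_def by auto

lemma doteq_sym: "x \<doteq> y \<Longrightarrow> y \<doteq> x"
proof -
  assume "x \<doteq> y"
  then obtain k where "x = tvar powi k * y \<or> x = - (tvar powi k * y)" by (auto simp: doteq_iff)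
  moreover have "y = tvar powi (- k) * (tvar powi k * y)"
    by (simp add: power_int_minus mult.assoc[symmetric])
  ultimately have "y = tvar powi (- k) * x \<or> y = - (tvar powi (- k) * x)" by auto
  then show "y \<doteq> x" by (auto simp: doteq_iff)
qed

lemma doteq_trans: "x \<doteq> y \<Longrightarrow> y \<doteq> z \<Longrightarrow> x \<doteq> z"
proof -
  assume "x \<doteq> y" "y \<doteq> z"
  then obtain k l where "x = tvar powi k * y \<or> x = - (tvar powi k * y)"
    and "y = tvar powi l * z \<or> y = - (tvar powi l * z)"
    by (auto simp: doteq_iff)
  then have "x = tvar powi (k + l) * z \<or> x = - (tvar powi (k + l) * z)"
    by (auto simp: power_int_add mult.assoc)
  then show "x \<doteq> z" by (auto simp: doteq_iff)
qed

lemma doteq_mult_cancel_left: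
  assumes "c \<noteq> 0" "c * x \<doteq> c * y"
  shows "x \<doteq> y"
proof -
  obtain k where "c * x = tvar powi k * (c * y) \<or> c * x = - (tvar powi k * (c * y))"
    using assms(2) by (auto simp: doteq_iff)
  then have "c * x = c * (tvar powi k * y) \<or> c * x = c * - (tvar powi k * y)"
    by (simp add: ac_simps)
  then have "x = tvar powi k * y \<or> x = - (tvar powi k * y)"
    using mult_left_cancel[OF assms(1)] by blast
  then show ?thesis by (auto simp: doteq_iff)
qed

lemma lead_coeff_shift_eq:
  assumes "polyQt p = of_int \<sigma> * tvar powi k * polyQt q"
  shows "lead_coeff p = \<sigma> * lead_coeff q"
proof (cases "0 \<le> k")
  case True
  then have "polyQt p = polyQt (smult \<sigma> ([:0, 1:] ^ nat k * q))"
    using assms by (simp add: power_int_def)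
  then have "lead_coeff p = lead_coeff (smult \<sigma> ([:0, 1:] ^ nat k * q))" by (simp only: polyQt_eq_iff)
  then show ?thesis by (simp add: lead_coeff_mult lead_coeff_power)
next
  case False
  then have "polyQt p * tvar ^ nat (- k) = of_int \<sigma> * polyQt q"
    using assms by (simp add: power_int_def field_simps)
  then have "polyQt (p * [:0, 1:] ^ nat (- k)) = polyQt (smult \<sigma> q)" by simp
  then have "lead_coeff (p * [:0, 1:] ^ nat (- k)) = lead_coeff (smult \<sigma> q)" by (simp only: polyQt_eq_iff)
  then show ?thesis by (simp add: lead_coeff_mult lead_coeff_power)
qed

lemma lead_coeff_doteq:
  assumes "polyQt p \<doteq> polyQt q"
  shows "lead_coeff p = lead_coeff q \<or> lead_coeff p = - lead_coeff q"
proof -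
  obtain k where "polyQt p = tvar powi k * polyQt q \<or> polyQt p = - (tvar powi k * polyQt q)"
    using assms by (auto simp: doteq_iff)
  then show ?thesis
  proof
    assume "polyQt p = tvar powi k * polyQt q"
    then have "lead_coeff p = 1 * lead_coeff q" using lead_coeff_shift_eq[of p 1 k q] by simp
    then show ?thesis by simp
  next
    assume "polyQt p = - (tvar powi k * polyQt q)"
    then have "lead_coeff p = (-1) * lead_coeff q" using lead_coeff_shift_eq[of p "-1" k q] by simp
    then show ?thesis by simp
  qed
qed

lemma lead_coeff_mult_reflect:
  "lead_coeff (f * (f \<circ>\<^sub>p [:0, -1:])) = (-1) ^ degree f * lead_coeff (f :: int poly) ^ 2"
  by (simp add: lead_coeff_mult lead_coeff_comp power2_eq_square)

lemma not_doteq_reflect_product: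
  assumes "\<And>z :: int. z ^ 2 \<noteq> \<bar>lead_coeff p\<bar>"
  shows "\<not> polyQt p \<doteq> polyQt (f * (f \<circ>\<^sub>p [:0, -1:]))"
proof
  assume "polyQt p \<doteq> polyQt (f * (f \<circ>\<^sub>p [:0, -1:]))"
  from lead_coeff_doteq[OF this] have "\<bar>lead_coeff p\<bar> = lead_coeff f ^ 2"
    by (auto simp: lead_coeff_mult_reflect abs_mult power_abs)
  with assms[of "lead_coeff f"] show False by simp
qed

lemma int_square_ne_3: "(z :: int) ^ 2 \<noteq> 3"
proof
  assume sq: "z ^ 2 = 3"
  consider "\<bar>z\<bar> \<le> 1" | "2 \<le> \<bar>z\<bar>" by linarith
  then show False
  proof cases
    case 1
    then have "\<bar>z\<bar> ^ 2 \<le> 1 ^ 2" by (intro power_mono) auto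
    with sq show False by simp
  next
    case 2
    then have "2 ^ 2 \<le> \<bar>z\<bar> ^ 2" by (intro power_mono) auto
    with sq show False by simp
  qed
qed

theorem theorem1p2:
  shows "\<exists>a. is_epi_D3 a
     \<and> twisted_alexander a 0 \<doteq>
          polyQt (Alex_10_164 * [:3, 0, -13, 0, 13, 0, -3:]) / polyQt [:-1, 1:]
     \<and> \<not> (\<exists>f :: int poly. twisted_alexander a 0 \<doteq>
          polyQt Alex_10_164 / polyQt [:1, -1:] * polyQt f * polyQt (f \<circ>\<^sub>p [:0, -1:]))"
proof (intro exI[of _ alpha_10_164] conjI)
  define c where "c = polyQt Alex_10_164 / polyQt [:1, -1:]"
  define B :: "int poly" where "B = [:3, 0, -13, 0, 13, 0, -3:]"
  have TA: "twisted_alexander alpha_10_164 0 \<doteq> c * polyQt B"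
    using twisted_alexander_alpha_10_164_factored unfolding doteq_iff c_def B_def by blast
  show "is_epi_D3 alpha_10_164" by (rule alpha_10_164_epi)
  have "polyQt [:-1, 1:] = - polyQt [:1, -1:]"
    by (simp flip: polyQt.hom_uminus)
  then have "c * polyQt B \<doteq> polyQt (Alex_10_164 * B) / polyQt [:-1, 1:]"
    unfolding doteq_iff c_def by (intro exI[of _ 0]) simp
  with TA show "twisted_alexander alpha_10_164 0 \<doteq> polyQt (Alex_10_164 * B) / polyQt [:-1, 1:]"
    by (rule doteq_trans)
  show "\<not> (\<exists>f :: int poly. twisted_alexander alpha_10_164 0 \<doteq> c * polyQt f * polyQt (f \<circ>\<^sub>p [:0, -1:]))"
  proof
    assume "\<exists>f :: int poly. twisted_alexander alpha_10_164 0 \<doteq> c * polyQt f * polyQt (f \<circ>\<^sub>p [:0, -1:])"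
    then obtain f where "twisted_alexander alpha_10_164 0 \<doteq> c * polyQt (f * (f \<circ>\<^sub>p [:0, -1:]))"
      by (auto simp: mult.assoc)
    with TA have "c * polyQt B \<doteq> c * polyQt (f * (f \<circ>\<^sub>p [:0, -1:]))"
      by (blast intro: doteq_trans doteq_sym)
    then have "polyQt B \<doteq> polyQt (f * (f \<circ>\<^sub>p [:0, -1:]))"
      by (rule doteq_mult_cancel_left[rotated]) (simp add: c_def Alex_10_164_def)
    moreover have "z ^ 2 \<noteq> \<bar>lead_coeff B\<bar>" for z using int_square_ne_3 by (simp add: B_def)
    ultimately show False using not_doteq_reflect_product by blast
  qed
qed

end
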